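(* Let $\mathbb{X},\mathbb{Y}$ be finite-dimensional Banach spaces and let $T\in\mathbb{L}(\mathbb{X},\mathbb{Y})$ with $\|T\|=1$. Then $T$ is $k$-smooth if and only if its adjoint $T^*\in\mathbb{L}(\mathbb{Y}^*,\mathbb{X}^* )$ is $k$-smooth.
   Context: $\mathbb{L}(\mathbb{X},\mathbb{Y})$ is the space of linear operators with the operator norm. For a Banach space $\mathbb{Z}$ and a unit vector $z$, $J(z)=\{f\in \mathbb{Z}^*:\|f\|=1,\ f(z)=1\}$; $z$ is $k$-smooth if $\dim\operatorname{span} J(z)=k$. An operator of norm one is $k$-smooth if it is a $k$-smooth point of the unit sphere of the corresponding operator space. *)

theory Defs
  imports "HOL-Analysis.Analysis"
begin

definition supp_funcs :: "'z::real_normed_vector \<Rightarrow> ('z \<Rightarrow>\<^sub>L real) set" where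
  "supp_funcs z = {f. norm f = 1 \<and> blinfun_apply f z = 1}"

definition k_smooth :: "'z::real_normed_vector \<Rightarrow> nat \<Rightarrow> bool" where
  "k_smooth z k \<longleftrightarrow> norm z = 1 \<and> dim (span (supp_funcs z)) = k"

definition fin_dim_space :: "'a::real_vector itself \<Rightarrow> bool" where
  "fin_dim_space _ \<longleftrightarrow> (\<exists>B::'a set. finite B \<and> span B = UNIV)"

definition adjoint_op :: "('a::real_normed_vector \<Rightarrow>\<^sub>L 'b::real_normed_vector)
    \<Rightarrow> (('b \<Rightarrow>\<^sub>L real) \<Rightarrow>\<^sub>L ('a \<Rightarrow>\<^sub>L real))" where
  "adjoint_op T = Blinfun (\<lambda>g. g o\<^sub>L T)"

end

theory Submission
  imports Defs
begin

text \<open>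
  The adjoint map \<open>T \<mapsto> T\<^sup>*\<close> is a linear isometry of \<open>L(X,Y)\<close> onto \<open>L(Y\<^sup>*,X\<^sup>*)\<close>:
  it is isometric by the Hahn--Banach theorem (in finite dimension, finitely many
  one-dimensional extension steps suffice), and it is onto because \<open>Y\<close> is reflexive, which follows from
  \<open>dim Y\<^sup>*\<^sup>* \<le> dim Y\<^sup>* \<le> dim Y\<close>.  A surjective linear isometry \<open>Q\<close> induces the linear
  bijection \<open>f \<mapsto> f \<circ> Q\<close> between the duals, which maps \<open>J(Q z)\<close> onto \<open>J(z)\<close>; hence
  \<open>z\<close> and \<open>Q z\<close> are smooth of the same order.
\<close>

section \<open>Hahn--Banach in finite dimension\<close>

lemma hahn_banach_separating_constant:
  fixes g :: "'a::real_normed_vector \<Rightarrow> real"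
  assumes g: "linear g" and M: "subspace M" and dominated: "\<And>u. u \<in> M \<Longrightarrow> g u \<le> norm u"
  obtains c where "\<And>m. m \<in> M \<Longrightarrow> g m - norm (m - v) \<le> c"
    and "\<And>m. m \<in> M \<Longrightarrow> c \<le> norm (m + v) - g m"
proof -
  have sep: "g m - norm (m - v) \<le> norm (m' + v) - g m'" if "m \<in> M" "m' \<in> M" for m m'
  proof -
    have "g m + g m' \<le> norm (m + m')"
      using that dominated M by (simp add: linear_add[OF g, symmetric] subspace_add)
    also have "\<dots> \<le> norm (m - v) + norm (m' + v)"
      using norm_triangle_ineq[of "m - v" "m' + v"] by simp
    finally show ?thesis by simp
  qed
  have "0 \<in> M"
    using M by (rule subspace_0)
  then show thesis
    using sep by (intro that[of "SUP m\<in>M. g m - norm (m - v)"])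
      (auto intro!: cSUP_upper cSUP_least bdd_aboveI2)
qed

lemma hahn_banach_extension_constant:
  fixes g :: "'a::real_normed_vector \<Rightarrow> real"
  assumes g: "linear g" and M: "subspace M" and dominated: "\<And>u. u \<in> M \<Longrightarrow> g u \<le> norm u"
  obtains c where "\<And>m t. m \<in> M \<Longrightarrow> g m + t * c \<le> norm (m + t *\<^sub>R v)"
proof -
  obtain c where lower: "\<And>m. m \<in> M \<Longrightarrow> g m - norm (m - v) \<le> c"
    and upper: "\<And>m. m \<in> M \<Longrightarrow> c \<le> norm (m + v) - g m"
    using hahn_banach_separating_constant[OF g M dominated] by metis
  have "g m + t * c \<le> norm (m + t *\<^sub>R v)" if m: "m \<in> M" for m t
  proof (cases rule: linorder_cases[of t 0])
    case less
    have "m /\<^sub>R (- t) - v = (m + t *\<^sub>R v) /\<^sub>R (- t)"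
      using less by (simp add: algebra_simps)
    then have "norm (m /\<^sub>R (- t) - v) = norm (m + t *\<^sub>R v) / (- t)"
      using less by (simp add: divide_inverse_commute)
    moreover have "g m / (- t) - norm (m /\<^sub>R (- t) - v) \<le> c"
      using lower[OF subspace_scale[OF M m, of "inverse (- t)"]]
      by (simp only: linear_scale[OF g] divide_inverse_commute real_scaleR_def)
    ultimately show ?thesis
      using less by (simp add: field_simps)
  next
    case equal
    then show ?thesis using dominated m by simp
  next
    case greater
    have "m /\<^sub>R t + v = (m + t *\<^sub>R v) /\<^sub>R t"
      using greater by (simp add: algebra_simps)
    then have "norm (m /\<^sub>R t + v) = norm (m + t *\<^sub>R v) / t"
      using greater by (simp add: divide_inverse_commute)
    moreover have "c \<le> norm (m /\<^sub>R t + v) - g m / t"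
      using upper[OF subspace_scale[OF M m, of "inverse t"]]
      by (simp only: linear_scale[OF g] divide_inverse_commute real_scaleR_def)
    ultimately show ?thesis
      using greater by (simp add: field_simps)
  qed
  then show thesis
    by (rule that)
qed

lemma exists_functional_annihilating_subspace:
  fixes v :: "'a::real_vector"
  assumes M: "subspace M" and v: "v \<notin> M"
  obtains h :: "'a \<Rightarrow> real" where "linear h" "h v = 1" "\<And>u. u \<in> M \<Longrightarrow> h u = 0"
proof -
  obtain B where B: "B \<subseteq> M" "independent B" "span B = M"
    using M basis_exists span_subspace by metis
  have indep: "independent (insert v B)"
    using B v by (simp add: independent_insertI)
  obtain h :: "'a \<Rightarrow> real"
    where h: "linear h" "\<And>x. x \<in> insert v B \<Longrightarrow> h x = (if x = v then 1 else 0)"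
    using linear_independent_extend[OF indep, of "\<lambda>x. if x = v then 1 else 0"] by blast
  have "h x = 0" if "x \<in> B" for x
    using h(2)[of x] B(1) v that by auto
  then have "h u = 0" if "u \<in> M" for u
    using linear_eq_0_on_span[OF h(1), of B u] B(3) that by auto
  then show thesis using h that by simp
qed

lemma hahn_banach_extend_step:
  fixes g :: "'a::real_normed_vector \<Rightarrow> real"
  assumes g: "linear g" and M: "subspace M" and dominated: "\<And>u. u \<in> M \<Longrightarrow> g u \<le> norm u"
    and v: "v \<notin> M"
  obtains g' where "linear g'" "\<And>u. u \<in> M \<Longrightarrow> g' u = g u"
    "\<And>u. u \<in> span (insert v M) \<Longrightarrow> g' u \<le> norm u"
proof -
  obtain c where c: "\<And>m t. m \<in> M \<Longrightarrow> g m + t * c \<le> norm (m + t *\<^sub>R v)"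
    using hahn_banach_extension_constant[OF g M dominated] by metis
  obtain h :: "'a \<Rightarrow> real" where h: "linear h" "h v = 1" "\<And>u. u \<in> M \<Longrightarrow> h u = 0"
    using exists_functional_annihilating_subspace[OF M v] by blast
  define g' where "g' u = g u + (c - g v) * h u" for u
  have "linear g'"
    using linear_compose_add[OF g linear_compose_scale_right[OF h(1)]]
    by (simp add: g'_def[abs_def])
  moreover have "g' u = g u" if "u \<in> M" for u
    using h(3)[OF that] by (simp add: g'_def)
  moreover have "g' u \<le> norm u" if uv: "u \<in> span (insert v M)" for u
  proof -
    obtain t where t: "u - t *\<^sub>R v \<in> M"
      using uv by (auto simp: span_insert span_eq_iff[THEN iffD2, OF M])
    define m where "m = u - t *\<^sub>R v"
    have m: "m \<in> M" and u: "u = m + t *\<^sub>R v"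
      using t by (simp_all add: m_def)
    have "g' u = g m + t * c"
      using h m by (simp add: g'_def u linear_add[OF g] linear_scale[OF g]
          linear_add[OF h(1)] linear_scale[OF h(1)] algebra_simps)
    then show ?thesis
      using c[OF m] u by simp
  qed
  ultimately show thesis by (rule that)
qed

lemma hahn_banach_finite_extension:
  fixes g :: "'a::real_normed_vector \<Rightarrow> real"
  assumes S: "finite S" and g: "linear g" and M: "subspace M"
    and dominated: "\<And>u. u \<in> M \<Longrightarrow> g u \<le> norm u"
  obtains g' where "linear g'" "\<And>u. u \<in> M \<Longrightarrow> g' u = g u"
    "\<And>u. u \<in> span (M \<union> S) \<Longrightarrow> g' u \<le> norm u"
  using S
proof (induction S arbitrary: thesis rule: finite_induct)
  case empty
  then show ?case using g dominated by (simp add: span_eq_iff[THEN iffD2, OF M])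
next
  case (insert v S)
  obtain g1 where g1: "linear g1" "\<And>u. u \<in> M \<Longrightarrow> g1 u = g u"
    "\<And>u. u \<in> span (M \<union> S) \<Longrightarrow> g1 u \<le> norm u"
    using insert.IH by blast
  have span_eq: "span (M \<union> insert v S) = span (insert v (span (M \<union> S)))"
    by (simp add: span_insert) (metis Un_insert_right span_insert span_span)
  show ?case
  proof (cases "v \<in> span (M \<union> S)")
    case True
    then have "span (M \<union> insert v S) = span (M \<union> S)"
      by (metis Un_insert_right span_redundant)
    then show ?thesis using insert.prems g1 by simp
  next
    case False
    obtain g2 where g2: "linear g2" "\<And>u. u \<in> span (M \<union> S) \<Longrightarrow> g2 u = g1 u"
      "\<And>u. u \<in> span (insert v (span (M \<union> S))) \<Longrightarrow> g2 u \<le> norm u"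
      using hahn_banach_extend_step[OF g1(1) subspace_span g1(3) False] by blast
    have "g2 u = g u" if "u \<in> M" for u
      using that g2(2) g1(2) span_superset[of "M \<union> S"] by auto
    then show ?thesis
      by (rule insert.prems[OF g2(1)]) (use g2(3) span_eq in auto)
  qed
qed

lemma hahn_banach_fin_dim:
  fixes g :: "'a::real_normed_vector \<Rightarrow> real"
  assumes fd: "fin_dim_space TYPE('a)" and g: "linear g" and M: "subspace M"
    and dominated: "\<And>u. u \<in> M \<Longrightarrow> g u \<le> norm u"
  obtains f :: "'a \<Rightarrow>\<^sub>L real" where "norm f \<le> 1" "\<And>u. u \<in> M \<Longrightarrow> f u = g u"
proof -
  obtain S :: "'a set" where S: "finite S" "span S = UNIV"
    using fd unfolding fin_dim_space_def by blast
  have "span (M \<union> S) = UNIV"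
    by (metis S(2) Un_upper2 span_mono top.extremum_unique)
  then obtain g' where g': "linear g'" "\<And>u. u \<in> M \<Longrightarrow> g' u = g u" "\<And>u. g' u \<le> norm u"
    using hahn_banach_finite_extension[OF S(1) g M dominated] by (metis UNIV_I)
  have bound: "norm (g' u) \<le> norm u * 1" for u
    using g'(3)[of u] g'(3)[of "- u"] by (simp add: linear_neg[OF g'(1)])
  then have "bounded_linear g'"
    using g'(1) by (intro bounded_linear_intro[of g' 1]) (simp_all add: linear_add linear_scale)
  then show thesis
    using g'(2) bound by (intro that[of "Blinfun g'"] norm_blinfun_bound)
      (simp_all add: bounded_linear_Blinfun_apply)
qed

lemma exists_norming_functional:
  fixes y :: "'a::real_normed_vector"
  assumes fd: "fin_dim_space TYPE('a)"
  obtains f :: "'a \<Rightarrow>\<^sub>L real" where "norm f \<le> 1" "f y = norm y"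
proof (cases "y = 0")
  case True
  then show thesis by (intro that[of 0]) simp_all
next
  case False
  then obtain g :: "'a \<Rightarrow> real" where g: "linear g" "g y = norm y"
    using linear_independent_extend[of "{y}" "\<lambda>_. norm y"] by auto
  have "g u \<le> norm u" if u: "u \<in> span {y}" for u
  proof -
    obtain t where "u = t *\<^sub>R y"
      using u by (auto simp: span_singleton)
    then show ?thesis
      using g by (simp add: linear_scale[OF g(1)] mult_right_mono)
  qed
  then obtain f :: "'a \<Rightarrow>\<^sub>L real" where "norm f \<le> 1" "\<And>u. u \<in> span {y} \<Longrightarrow> f u = g u"
    using hahn_banach_fin_dim[OF fd g(1) subspace_span] by blast
  then show thesis
    using that g(2) span_base[of y "{y}"] by simp
qed

lemma functionals_separate_points:
  fixes x y :: "'a::real_normed_vector"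
  assumes "fin_dim_space TYPE('a)" and "\<And>f :: 'a \<Rightarrow>\<^sub>L real. f x = f y"
  shows "x = y"
proof -
  obtain f :: "'a \<Rightarrow>\<^sub>L real" where "f (x - y) = norm (x - y)"
    using exists_norming_functional[OF assms(1)] by blast
  then show ?thesis using assms(2)[of f] by (simp add: blinfun.diff_right)
qed

section \<open>Reflexivity of finite-dimensional spaces\<close>

lemma fin_dim_space_obtain_basis:
  assumes "fin_dim_space TYPE('a)"
  obtains B :: "'a::real_vector set" where "finite B" "independent B" "span B = UNIV"
proof -
  obtain W :: "'a set" where W: "finite W" "span W = UNIV"
    using assms unfolding fin_dim_space_def by blast
  obtain B where "B \<subseteq> W" "independent B" "W \<subseteq> span B"
    using maximal_independent_subset by metis
  then show thesis
    using W that by (metis finite_subset span_eq top_greatest)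
qed

lemma finite_basis_of_inj_linear:
  fixes f :: "'u::real_vector \<Rightarrow> 'v::real_vector" and W :: "'v set"
  assumes f: "linear f" "inj f" and W: "finite W" "span W = UNIV"
  obtains C :: "'u set" where "finite C" "independent C" "span C = UNIV" "card C \<le> card W"
proof -
  obtain C :: "'u set" where C: "independent C" "span C = UNIV"
    using maximal_independent_subset[of "UNIV :: 'u set"] by (metis top_le)
  have "independent (f ` C)"
    using linear_independent_injective_image[OF f(1) C(1)] f(2) by (simp add: inj_on_def)
  moreover have "f ` C \<subseteq> span W"
    using W(2) by simp
  ultimately have "finite (f ` C) \<and> card (f ` C) \<le> card W"
    by (rule independent_span_bound[OF W(1)])
  moreover have "inj_on f C"
    using f(2) by (simp add: inj_on_def inj_def)
  ultimately show thesis
    using C by (intro that) (auto simp: card_image finite_image_iff)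
qed

lemma dual_finite_basis:
  fixes B :: "'v::real_normed_vector set"
  assumes B: "finite B" "independent B" "span B = UNIV"
  obtains C :: "('v \<Rightarrow>\<^sub>L real) set"
  where "finite C" "independent C" "span C = UNIV" "card C \<le> card B"
proof -
  define J where "J f = (\<Sum>b\<in>B. f b *\<^sub>R b)" for f :: "'v \<Rightarrow>\<^sub>L real"
  have J: "linear J"
    unfolding J_def[abs_def] by (intro linearI) (simp_all add: blinfun.add_left
        blinfun.scaleR_left scaleR_add_left sum.distrib scaleR_sum_right)
  have "f = 0" if "J f = 0" for f
  proof -
    have "f b = 0" if "b \<in> B" for b
      using \<open>J f = 0\<close> B(1,2) that unfolding J_def independent_explicit_finite_subsets by blast
    then have "f x = 0" for x
      using linear_eq_0_on_span[OF bounded_linear.linear[OF blinfun.bounded_linear_right]] B(3)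
      by (metis UNIV_I)
    then show ?thesis by (simp add: blinfun_eqI)
  qed
  then have "inj J"
    using J by (simp add: linear_inj_iff_eq_0)
  then show thesis
    using finite_basis_of_inj_linear[OF J _ B(1,3)] that by metis
qed

lemma surj_inj_linear_card_le:
  fixes f :: "'u::real_vector \<Rightarrow> 'v::real_vector" and B :: "'u set" and D :: "'v set"
  assumes f: "linear f" "inj f" and B: "finite B" "independent B" "span B = UNIV"
    and D: "finite D" "span D = UNIV" "card D \<le> card B"
  shows "surj f"
proof -
  have "y \<in> range f" for y
  proof (rule ccontr)
    assume y: "y \<notin> range f"
    have "independent (f ` B)"
      using linear_independent_injective_image[OF f(1) B(2)] f(2) by (simp add: inj_on_def inj_def)
    moreover have "range f = span (f ` B)"
      using linear_span_image[OF f(1), of B] B(3) by simp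
    ultimately have "independent (insert y (f ` B))"
      using y by (simp add: independent_insertI)
    then have "card (insert y (f ` B)) \<le> card D"
      using independent_span_bound[OF D(1)] D(2) by simp
    moreover have "y \<notin> f ` B"
      using y by blast
    then have "card (insert y (f ` B)) = Suc (card B)"
      using B(1) card_image[OF inj_on_subset[OF f(2) subset_UNIV]] by simp
    ultimately show False
      using D(3) by simp
  qed
  then show ?thesis
    by blast
qed

lemma bidual_functional_is_evaluation:
  fixes F :: "('a::real_normed_vector \<Rightarrow>\<^sub>L real) \<Rightarrow>\<^sub>L real"
  assumes fd: "fin_dim_space TYPE('a)"
  obtains y where "\<And>f. F f = f y"
proof -
  define ev where "ev y = Blinfun (\<lambda>f :: 'a \<Rightarrow>\<^sub>L real. f y)" for y
  have ev_apply: "ev y f = f y" for y f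
    unfolding ev_def by (simp add: bounded_linear_Blinfun_apply[OF blinfun.bounded_linear_left])
  have ev: "linear ev"
    by (intro linearI blinfun_eqI)
      (simp_all add: ev_apply blinfun.add_left blinfun.add_right blinfun.scaleR_left blinfun.scaleR_right)
  have "inj ev"
    by (intro injI functionals_separate_points[OF fd]) (metis ev_apply)
  obtain B :: "'a set" where B: "finite B" "independent B" "span B = UNIV"
    using fin_dim_space_obtain_basis[OF fd] by blast
  obtain C :: "('a \<Rightarrow>\<^sub>L real) set"
    where C: "finite C" "independent C" "span C = UNIV" "card C \<le> card B"
    using dual_finite_basis[OF B] by blast
  obtain D :: "(('a \<Rightarrow>\<^sub>L real) \<Rightarrow>\<^sub>L real) set"
    where D: "finite D" "independent D" "span D = UNIV" "card D \<le> card C"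
    using dual_finite_basis[OF C(1-3)] by blast
  have "surj ev"
    using C(4) D(4) by (intro surj_inj_linear_card_le[OF ev \<open>inj ev\<close> B D(1,3)]) simp
  then show thesis
    using that ev_apply by (metis surjD)
qed

section \<open>Smoothness is invariant under surjective linear isometries\<close>

lemma dim_image_inj_linear:
  fixes f :: "'u::real_vector \<Rightarrow> 'v::real_vector"
  assumes f: "linear f" "inj f"
  shows "dim (f ` S) = dim S"
proof -
  obtain B where B: "B \<subseteq> S" "independent B" "S \<subseteq> span B" "card B = dim S"
    by (rule basis_exists)
  have "independent (f ` B)"
    using linear_independent_injective_image[OF f(1) B(2)] f(2) by (simp add: inj_on_def inj_def)
  moreover have "f ` S \<subseteq> span (f ` B)"
    using linear_spans_image[OF f(1) B(3)] .
  ultimately have "card (f ` B) = dim (f ` S)"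
    using B(1) by (intro basis_card_eq_dim) auto
  moreover have "card (f ` B) = card B"
    using card_image[OF inj_on_subset[OF f(2) subset_UNIV]] .
  ultimately show ?thesis
    using B(4) by simp
qed

lemma norm_blinfun_compose_surj_isometry:
  fixes Q :: "'u::real_normed_vector \<Rightarrow>\<^sub>L 'v::real_normed_vector"
    and f :: "'v \<Rightarrow>\<^sub>L 'w::real_normed_vector"
  assumes Q: "surj Q" "\<And>z. norm (Q z) = norm z"
  shows "norm (f o\<^sub>L Q) = norm f"
proof (rule antisym)
  have "norm Q \<le> 1"
    using Q(2) by (intro norm_blinfun_bound) simp_all
  then show "norm (f o\<^sub>L Q) \<le> norm f"
    using norm_blinfun_compose[of f Q] mult_left_le[of "norm Q" "norm f"] by simp
  show "norm f \<le> norm (f o\<^sub>L Q)"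
  proof (rule norm_blinfun_bound)
    fix v
    obtain z where "v = Q z"
      using Q(1) by blast
    then show "norm (f v) \<le> norm (f o\<^sub>L Q) * norm v"
      using norm_blinfun[of "f o\<^sub>L Q" z] Q(2) by simp
  qed simp
qed

lemma surj_blinfun_compose_surj_isometry:
  fixes Q :: "'u::real_normed_vector \<Rightarrow>\<^sub>L 'v::real_normed_vector"
  assumes Q: "surj Q" "\<And>z. norm (Q z) = norm z"
  shows "surj (\<lambda>f :: 'v \<Rightarrow>\<^sub>L 'w::real_normed_vector. f o\<^sub>L Q)"
proof -
  obtain R where R: "linear R" "\<And>v. Q (R v) = v"
    using linear_surjective_right_inverse[OF bounded_linear.linear[OF blinfun.bounded_linear_right] Q(1)]
    by (metis comp_apply id_apply)
  have "norm (R v) = norm v" for v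
    using Q(2)[of "R v"] R(2)[of v] by simp
  then have "bounded_linear R"
    using R(1) by (intro bounded_linear_intro[of R 1]) (simp_all add: linear_add linear_scale)
  have R_Q: "R (Q z) = z" for z
    using R(2)[of "Q z"] Q(2)[of "R (Q z) - z"] by (simp add: blinfun.diff_right)
  have "g = (g o\<^sub>L Blinfun R) o\<^sub>L Q" for g :: "'u \<Rightarrow>\<^sub>L 'w"
    by (rule blinfun_eqI) (simp add: bounded_linear_Blinfun_apply[OF \<open>bounded_linear R\<close>] R_Q)
  then show ?thesis
    by blast
qed

lemma supp_funcs_surj_isometry:
  fixes Q :: "'u::real_normed_vector \<Rightarrow>\<^sub>L 'v::real_normed_vector"
  assumes Q: "surj Q" "\<And>z. norm (Q z) = norm z"
  shows "supp_funcs z = (\<lambda>f. f o\<^sub>L Q) ` supp_funcs (Q z)"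
proof -
  have key: "f o\<^sub>L Q \<in> supp_funcs z \<longleftrightarrow> f \<in> supp_funcs (Q z)" for f :: "'v \<Rightarrow>\<^sub>L real"
    by (simp add: supp_funcs_def norm_blinfun_compose_surj_isometry[OF Q])
  show ?thesis
  proof (rule set_eqI)
    fix g :: "'u \<Rightarrow>\<^sub>L real"
    obtain f where "g = f o\<^sub>L Q"
      using surj_blinfun_compose_surj_isometry[OF Q] by (metis surjD)
    then show "g \<in> supp_funcs z \<longleftrightarrow> g \<in> (\<lambda>f. f o\<^sub>L Q) ` supp_funcs (Q z)"
      using key by blast
  qed
qed

lemma k_smooth_surj_isometry:
  fixes Q :: "'u::real_normed_vector \<Rightarrow>\<^sub>L 'v::real_normed_vector"
  assumes Q: "surj Q" "\<And>z. norm (Q z) = norm z"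
  shows "k_smooth (Q z) k \<longleftrightarrow> k_smooth z k"
proof -
  define \<Phi> where "\<Phi> f = f o\<^sub>L Q" for f :: "'v \<Rightarrow>\<^sub>L real"
  have "linear \<Phi>"
    unfolding \<Phi>_def[abs_def]
    by (rule bounded_linear.linear[OF
          bounded_bilinear.bounded_linear_left[OF bounded_bilinear_blinfun_compose]])
  moreover have "inj \<Phi>"
    unfolding linear_inj_iff_eq_0[OF \<open>linear \<Phi>\<close>]
    by (metis \<Phi>_def norm_blinfun_compose_surj_isometry[OF Q] norm_eq_zero)
  moreover have "span (supp_funcs z) = \<Phi> ` span (supp_funcs (Q z))"
    using supp_funcs_surj_isometry[OF Q] linear_span_image[OF \<open>linear \<Phi>\<close>]
    by (simp add: \<Phi>_def[abs_def])
  ultimately have "dim (span (supp_funcs z)) = dim (span (supp_funcs (Q z)))"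
    by (simp add: dim_image_inj_linear)
  then show ?thesis
    unfolding k_smooth_def Q(2) by simp
qed

section \<open>The adjoint\<close>

lemma norm_blinfun_le_of_norm_le_1:
  fixes f :: "'a::real_normed_vector \<Rightarrow>\<^sub>L 'b::real_normed_vector"
  assumes "norm x \<le> 1"
  shows "norm (f x) \<le> norm f"
  using norm_blinfun[of f x] mult_left_le[OF assms norm_ge_zero[of f]] by linarith

lemma adjoint_op_apply [simp]: "adjoint_op T g = g o\<^sub>L T"
  unfolding adjoint_op_def
  by (simp add: bounded_linear_Blinfun_apply
      bounded_bilinear.bounded_linear_left[OF bounded_bilinear_blinfun_compose])

lemma norm_adjoint_op_le: "norm (adjoint_op T) \<le> norm T"
  by (rule norm_blinfun_bound) (simp_all add: norm_blinfun_compose mult.commute)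

lemma bounded_linear_adjoint_op: "bounded_linear adjoint_op"
proof (rule bounded_linear_intro[of _ 1])
  show "adjoint_op (S + T) = adjoint_op S + adjoint_op T"
    for S T :: "'a::real_normed_vector \<Rightarrow>\<^sub>L 'b::real_normed_vector"
    by (intro blinfun_eqI) (simp add: blinfun.add_left blinfun.add_right)
  show "adjoint_op (r *\<^sub>R T) = r *\<^sub>R adjoint_op T" for r and T :: "'a \<Rightarrow>\<^sub>L 'b"
    by (intro blinfun_eqI) (simp add: blinfun.scaleR_left blinfun.scaleR_right)
  show "norm (adjoint_op T) \<le> norm T * 1" for T :: "'a \<Rightarrow>\<^sub>L 'b"
    using norm_adjoint_op_le by simp
qed

lemma norm_adjoint_op:
  fixes T :: "'a::real_normed_vector \<Rightarrow>\<^sub>L 'b::real_normed_vector"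
  assumes fd: "fin_dim_space TYPE('b)"
  shows "norm (adjoint_op T) = norm T"
proof (rule antisym[OF norm_adjoint_op_le])
  show "norm T \<le> norm (adjoint_op T)"
  proof (rule norm_blinfun_bound)
    fix x
    obtain g :: "'b \<Rightarrow>\<^sub>L real" where g: "norm g \<le> 1" "g (T x) = norm (T x)"
      using exists_norming_functional[OF fd] by blast
    have "norm (T x) = (adjoint_op T g) x"
      using g(2) by simp
    also have "\<dots> \<le> norm (adjoint_op T g) * norm x"
      using norm_blinfun[of "adjoint_op T g" x] by simp
    also have "\<dots> \<le> norm (adjoint_op T) * norm x"
      using norm_blinfun_le_of_norm_le_1[OF g(1), of "adjoint_op T"] by (intro mult_right_mono) simp_all
    finally show "norm (T x) \<le> norm (adjoint_op T) * norm x" .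
  qed simp
qed

lemma surj_adjoint_op:
  assumes fd: "fin_dim_space TYPE('b::real_normed_vector)"
  shows "surj (adjoint_op :: ('a::real_normed_vector \<Rightarrow>\<^sub>L 'b) \<Rightarrow> _)"
  unfolding surj_def
proof
  fix S :: "('b \<Rightarrow>\<^sub>L real) \<Rightarrow>\<^sub>L ('a \<Rightarrow>\<^sub>L real)"
  have "\<exists>y. \<forall>g. S g x = g y" for x
  proof -
    have bl: "bounded_linear (\<lambda>g. S g x)"
      using bounded_linear_compose[OF blinfun.bounded_linear_left blinfun.bounded_linear_right] .
    obtain y where "\<And>g. Blinfun (\<lambda>g. S g x) g = g y"
      using bidual_functional_is_evaluation[OF fd] by blast
    then show ?thesis
      using bounded_linear_Blinfun_apply[OF bl] by auto
  qed
  then obtain T0 where T0: "\<And>g x. S g x = g (T0 x)"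
    by metis
  have "bounded_linear T0"
  proof (rule bounded_linear_intro[of _ "norm S"])
    show "T0 (x + y) = T0 x + T0 y" for x y
      by (rule functionals_separate_points[OF fd]) (metis T0 blinfun.add_right)
    show "T0 (r *\<^sub>R x) = r *\<^sub>R T0 x" for r x
      by (rule functionals_separate_points[OF fd]) (metis T0 blinfun.scaleR_right)
    show "norm (T0 x) \<le> norm x * norm S" for x
    proof -
      obtain g :: "'b \<Rightarrow>\<^sub>L real" where g: "norm g \<le> 1" "g (T0 x) = norm (T0 x)"
        using exists_norming_functional[OF fd] by blast
      have "norm (T0 x) = S g x"
        using g(2) T0 by simp
      also have "\<dots> \<le> norm (S g) * norm x"
        using norm_blinfun[of "S g" x] by simp
      also have "\<dots> \<le> norm S * norm x"
        using norm_blinfun_le_of_norm_le_1[OF g(1), of S] by (intro mult_right_mono) simp_all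
      finally show ?thesis
        by (simp add: mult.commute)
    qed
  qed
  then have "S = adjoint_op (Blinfun T0)"
    by (intro blinfun_eqI) (simp add: bounded_linear_Blinfun_apply T0)
  then show "\<exists>T. S = adjoint_op T"
    by blast
qed

theorem proposition3p7:
  fixes T :: "'a::banach \<Rightarrow>\<^sub>L 'b::banach" and k :: nat
  assumes "fin_dim_space TYPE('a)" and "fin_dim_space TYPE('b)"
    and "norm T = 1"
  shows "k_smooth T k \<longleftrightarrow> k_smooth (adjoint_op T) k"
proof -
  let ?Q = "Blinfun (adjoint_op :: ('a \<Rightarrow>\<^sub>L 'b) \<Rightarrow> _)"
  have Q: "?Q S = adjoint_op S" for S
    by (simp add: bounded_linear_Blinfun_apply[OF bounded_linear_adjoint_op])
  have "k_smooth (?Q T) k \<longleftrightarrow> k_smooth T k"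
    by (rule k_smooth_surj_isometry) (simp_all add: Q norm_adjoint_op surj_adjoint_op assms(2))
  then show ?thesis
    by (simp add: Q)
qed

end
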